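(* Let $\mathcal{G}$ be a tomographically local GPT and let $M:\mathcal{G}\to\mathbf{RLinear}$ be a diagram-preserving, convex-linear and empirically adequate map. Suppose that for each system $A$ of $\mathcal{G}$, $\chi_A:A\to M(A)$ is a linear map satisfying $\chi_A\circ\rho=M(\rho)$ for every state $\rho$ of $A$ (states being linear maps $\mathbb{R}\to A$). Then for all systems $A,B$, $$\chi_{A\otimes B}=\chi_A\otimes\chi_B.$$
   Context: A process theory consists of systems (closed under a composition $A\otimes B$, with a trivial system $I$) and processes $T:A\to B$, closed under sequential composition $\circ$ and parallel composition $\otimes$ and containing identities; processes $I\to A$ are states, $A\to I$ effects, $I\to I$ scalars. $\mathbf{RLinear}$ is the process theory of finite-dimensional real vector spaces (composite $=$ tensor product, trivial system $\mathbb{R}$) and linear maps, with $\circ$ composition and $\otimes$ tensor product of maps. A tomographically local GPT is here a sub-process theory $\mathcal{G}$ of $\mathbf{RLinear}$ (closed under $\circ$, $\otimes$, containing identities) such that: each system $A$ is a finite-dimensional real vector space and the composite of $A$ and $B$ is $A\otimes B$; the states of $A$ span $A$ and the effects on $A$ span $A^*$; every scalar lies in $[0,1]$; for each type the set of processes is closed under convex combinations; each system $A$ has a distinguished deterministic effect $u_A$ with $u_{A\otimes B}=u_A\otimes u_B$. A map $M:\mathcal{G}\to\mathbf{RLinear}$ is diagram-preserving if it assigns to each system $A$ a vector space $M(A)$, with $M(A\otimes B)=M(A)\otimes M(B)$, $M(I)=\mathbb{R}$, and to each process $T:A\to B$ a linear map $M(T):M(A)\to M(B)$, such that $M(T'\circ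 T)=M(T')\circ M(T)$, $M(T\otimes T')=M(T)\otimes M(T')$, $M(\mathrm{id}_A)=\mathrm{id}_{M(A)}$. It is convex-linear if it preserves convex combinations of processes of the same type and coarse-grainings (sums) of effects whenever these relations hold in $\mathcal{G}$. It is empirically adequate if $M(s)=s$ for every scalar $s$. *)

theory Defs
  imports "Jordan_Normal_Form.Matrix"
begin

text \<open>
  Finite-dimensional real vector spaces are represented in coordinates: a system
  carries the space real^n (n = its dimension), a linear map real^m -> real^n is an
  n x m matrix, sequential composition is matrix product, and the tensor product
  of maps is the Kronecker product (standard index ordering, so the tensor product
  of spaces real^m (x) real^n is real^(m*n)).
\<close>

definition kron :: "real mat \<Rightarrow> real mat \<Rightarrow> real mat" where
  "kron S T = mat (dim_row S * dim_row T) (dim_col S * dim_col T)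
     (\<lambda>(i, j). S $$ (i div dim_row T, j div dim_col T) * T $$ (i mod dim_row T, j mod dim_col T))"

text \<open>A tomographically local GPT as a sub-process theory of RLinear.
  sdim A is the dimension of the vector space A, Proc A B the set of processes A -> B,
  u A the deterministic effect.\<close>

definition tl_gpt ::
  "('s \<Rightarrow> 's \<Rightarrow> 's) \<Rightarrow> 's \<Rightarrow> ('s \<Rightarrow> nat) \<Rightarrow> ('s \<Rightarrow> 's \<Rightarrow> real mat set) \<Rightarrow> ('s \<Rightarrow> real mat) \<Rightarrow> bool"
where
  "tl_gpt tens I sdim Proc u \<longleftrightarrow>
     \<comment> \<open>systems form a (strict) monoidal structure\<close>
     (\<forall>A B C. tens (tens A B) C = tens A (tens B C)) \<and>
     (\<forall>A. tens I A = A \<and> tens A I = A) \<and>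
     \<comment> \<open>composite system is the tensor product space, trivial system is R\<close>
     (\<forall>A B. sdim (tens A B) = sdim A * sdim B) \<and> sdim I = 1 \<and>
     \<comment> \<open>processes are linear maps A -> B\<close>
     (\<forall>A B. Proc A B \<subseteq> carrier_mat (sdim B) (sdim A)) \<and>
     \<comment> \<open>closure under sequential and parallel composition, identities\<close>
     (\<forall>A B C S T. T \<in> Proc A B \<longrightarrow> S \<in> Proc B C \<longrightarrow> S * T \<in> Proc A C) \<and>
     (\<forall>A B A' B' T T'. T \<in> Proc A B \<longrightarrow> T' \<in> Proc A' B' \<longrightarrow> kron T T' \<in> Proc (tens A A') (tens B B')) \<and>
     (\<forall>A. 1\<^sub>m (sdim A) \<in> Proc A A) \<and>
     \<comment> \<open>states of A span A\<close>
     (\<forall>A (x :: nat \<Rightarrow> real). \<exists>F c. finite F \<and> F \<subseteq> Proc I A \<and>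
        (\<forall>i < sdim A. x i = (\<Sum>\<rho>\<in>F. c \<rho> * \<rho> $$ (i, 0)))) \<and>
     \<comment> \<open>effects on A span the dual of A\<close>
     (\<forall>A (y :: nat \<Rightarrow> real). \<exists>F c. finite F \<and> F \<subseteq> Proc A I \<and>
        (\<forall>j < sdim A. y j = (\<Sum>e\<in>F. c e * e $$ (0, j)))) \<and>
     \<comment> \<open>scalars lie in [0,1]\<close>
     (\<forall>s \<in> Proc I I. 0 \<le> s $$ (0, 0) \<and> s $$ (0, 0) \<le> 1) \<and>
     \<comment> \<open>convexity\<close>
     (\<forall>A B T1 T2 (p :: real). T1 \<in> Proc A B \<longrightarrow> T2 \<in> Proc A B \<longrightarrow> 0 \<le> p \<longrightarrow> p \<le> 1 \<longrightarrow>
        p \<cdot>\<^sub>m T1 + (1 - p) \<cdot>\<^sub>m T2 \<in> Proc A B) \<and>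
     \<comment> \<open>deterministic effects\<close>
     (\<forall>A. u A \<in> Proc A I) \<and>
     (\<forall>A B. u (tens A B) = kron (u A) (u B))"

text \<open>A diagram-preserving map M : G -> RLinear; MS A is the dimension of M(A),
  MP A B T the linear map M(T) for T : A -> B.\<close>

definition diagram_preserving ::
  "('s \<Rightarrow> 's \<Rightarrow> 's) \<Rightarrow> 's \<Rightarrow> ('s \<Rightarrow> nat) \<Rightarrow> ('s \<Rightarrow> 's \<Rightarrow> real mat set)
   \<Rightarrow> ('s \<Rightarrow> nat) \<Rightarrow> ('s \<Rightarrow> 's \<Rightarrow> real mat \<Rightarrow> real mat) \<Rightarrow> bool"
where
  "diagram_preserving tens I sdim Proc MS MP \<longleftrightarrow>
     (\<forall>A B. MS (tens A B) = MS A * MS B) \<and> MS I = 1 \<and>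
     (\<forall>A B T. T \<in> Proc A B \<longrightarrow> MP A B T \<in> carrier_mat (MS B) (MS A)) \<and>
     (\<forall>A B C S T. T \<in> Proc A B \<longrightarrow> S \<in> Proc B C \<longrightarrow> MP A C (S * T) = MP B C S * MP A B T) \<and>
     (\<forall>A B A' B' T T'. T \<in> Proc A B \<longrightarrow> T' \<in> Proc A' B' \<longrightarrow>
        MP (tens A A') (tens B B') (kron T T') = kron (MP A B T) (MP A' B' T')) \<and>
     (\<forall>A. MP A A (1\<^sub>m (sdim A)) = 1\<^sub>m (MS A))"

definition convex_linear ::
  "'s \<Rightarrow> ('s \<Rightarrow> nat) \<Rightarrow> ('s \<Rightarrow> 's \<Rightarrow> real mat set)
   \<Rightarrow> ('s \<Rightarrow> nat) \<Rightarrow> ('s \<Rightarrow> 's \<Rightarrow> real mat \<Rightarrow> real mat) \<Rightarrow> bool"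
where
  "convex_linear I sdim Proc MS MP \<longleftrightarrow>
     \<comment> \<open>preservation of convex combinations\<close>
     (\<forall>A B T1 T2 (p :: real). T1 \<in> Proc A B \<longrightarrow> T2 \<in> Proc A B \<longrightarrow> 0 \<le> p \<longrightarrow> p \<le> 1 \<longrightarrow>
        MP A B (p \<cdot>\<^sub>m T1 + (1 - p) \<cdot>\<^sub>m T2) = p \<cdot>\<^sub>m MP A B T1 + (1 - p) \<cdot>\<^sub>m MP A B T2) \<and>
     \<comment> \<open>preservation of coarse-grainings of effects (finite sums)\<close>
     (\<forall>A e (E :: nat \<Rightarrow> real mat) K. finite K \<longrightarrow> e \<in> Proc A I \<longrightarrow> (\<forall>k\<in>K. E k \<in> Proc A I) \<longrightarrow>
        (\<forall>j < sdim A. e $$ (0, j) = (\<Sum>k\<in>K. E k $$ (0, j))) \<longrightarrow>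
        (\<forall>j < MS A. MP A I e $$ (0, j) = (\<Sum>k\<in>K. MP A I (E k) $$ (0, j))))"

definition empirically_adequate ::
  "'s \<Rightarrow> ('s \<Rightarrow> 's \<Rightarrow> real mat set) \<Rightarrow> ('s \<Rightarrow> 's \<Rightarrow> real mat \<Rightarrow> real mat) \<Rightarrow> bool"
where
  "empirically_adequate I Proc MP \<longleftrightarrow> (\<forall>s \<in> Proc I I. MP I I s = s)"

end

theory Submission
  imports Defs
begin

text \<open>
  The maps \<chi>_{A\<otimes>B} and \<chi>_A \<otimes> \<chi>_B agree on product states \<rho> \<otimes> \<sigma>: the state condition and
  diagram preservation give \<chi>_{A\<otimes>B} (\<rho> \<otimes> \<sigma>) = M(\<rho> \<otimes> \<sigma>) = M(\<rho>) \<otimes> M(\<sigma>) = \<chi>_A \<rho> \<otimes> \<chi>_B \<sigma>,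
  which is (\<chi>_A \<otimes> \<chi>_B)(\<rho> \<otimes> \<sigma>) by the mixed-product rule for Kronecker products.
  Since the states of A and of B span these spaces, product states span A \<otimes> B, so the
  two linear maps coincide.
\<close>

lemma sum_lessThan_mult:
  fixes m n :: nat
  shows "(\<Sum>k<m * n. f k) = (\<Sum>a<m. \<Sum>b<n. f (a * n + b))"
proof -
  have "(\<Sum>k<m * n. f k) = (\<Sum>a<m. \<Sum>k\<in>{a * n..<a * n + n}. f k)"
    by (rule sum.nat_group[symmetric])
  also have "\<dots> = (\<Sum>a<m. \<Sum>b<n. f (a * n + b))"
  proof (rule sum.cong)
    fix a
    show "(\<Sum>k\<in>{a * n..<a * n + n}. f k) = (\<Sum>b<n. f (a * n + b))"
      using sum.shift_bounds_nat_ivl[of f 0 "a * n" n] by (simp add: add.commute atLeast0LessThan)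
  qed simp
  finally show ?thesis .
qed

lemma dim_row_kron [simp]: "dim_row (kron S T) = dim_row S * dim_row T"
  and dim_col_kron [simp]: "dim_col (kron S T) = dim_col S * dim_col T"
  by (simp_all add: kron_def)

lemma index_kron [simp]:
  "i < dim_row S * dim_row T \<Longrightarrow> j < dim_col S * dim_col T \<Longrightarrow>
   kron S T $$ (i, j) = S $$ (i div dim_row T, j div dim_col T) * T $$ (i mod dim_row T, j mod dim_col T)"
  by (simp add: kron_def)

lemma kron_carrier_mat:
  "S \<in> carrier_mat m n \<Longrightarrow> T \<in> carrier_mat p q \<Longrightarrow> kron S T \<in> carrier_mat (m * p) (n * q)"
  unfolding carrier_mat_def by simp

lemma index_mult_mat_blocked:
  fixes Z W :: "'a :: comm_semiring_0 mat"
  assumes "Z \<in> carrier_mat m (n * q)" "W \<in> carrier_mat (n * q) l" "i < m" "j < l"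
  shows "(Z * W) $$ (i, j) = (\<Sum>a<n. \<Sum>b<q. Z $$ (i, a * q + b) * W $$ (a * q + b, j))"
  using assms by (simp add: scalar_prod_def atLeast0LessThan sum_lessThan_mult)

lemma mixed_radix_index:
  fixes a b n q :: nat
  assumes "a < n" "b < q"
  shows "a * q + b < n * q" "(a * q + b) div q = a" "(a * q + b) mod q = b"
proof -
  have "a * q + b < a * q + q" using assms(2) by simp
  also have "\<dots> \<le> n * q" using assms(1) by (metis Suc_leI mult_Suc mult_le_mono1 add.commute)
  finally show "a * q + b < n * q" .
  show "(a * q + b) div q = a" "(a * q + b) mod q = b" using assms(2) by simp_all
qed

lemma kron_mult_kron:
  fixes A B C D :: "real mat"
  assumes A: "A \<in> carrier_mat m n" and B: "B \<in> carrier_mat n k"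
    and C: "C \<in> carrier_mat p q" and D: "D \<in> carrier_mat q l"
  shows "kron A C * kron B D = kron (A * B) (C * D)"
proof (rule eq_matI)
  fix i j assume "i < dim_row (kron (A * B) (C * D))" "j < dim_col (kron (A * B) (C * D))"
  then have i: "i < m * p" and j: "j < k * l" using A B C D by simp_all
  have "(kron A C * kron B D) $$ (i, j) =
    (\<Sum>s<n. \<Sum>t<q. kron A C $$ (i, s * q + t) * kron B D $$ (s * q + t, j))"
    by (rule index_mult_mat_blocked[OF kron_carrier_mat[OF A C] kron_carrier_mat[OF B D] i j])
  also have "\<dots> = (\<Sum>s<n. \<Sum>t<q. A $$ (i div p, s) * C $$ (i mod p, t) * (B $$ (s, j div l) * D $$ (t, j mod l)))"
    using A B C D i j by (intro sum.cong refl) (simp add: mixed_radix_index)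
  also have "\<dots> = (\<Sum>s<n. A $$ (i div p, s) * B $$ (s, j div l)) * (\<Sum>t<q. C $$ (i mod p, t) * D $$ (t, j mod l))"
    by (simp add: sum_product mult_ac)
  also have "\<dots> = kron (A * B) (C * D) $$ (i, j)"
  proof -
    have "0 < p" "0 < l" using i j by (auto intro: gr0I)
    then show ?thesis
      using A B C D i j by (simp add: scalar_prod_def atLeast0LessThan less_mult_imp_div_less)
  qed
  finally show "(kron A C * kron B D) $$ (i, j) = kron (A * B) (C * D) $$ (i, j)" .
qed (use A B C D in simp_all)

definition spans_columns :: "nat \<Rightarrow> real mat set \<Rightarrow> bool" where
  "spans_columns n R \<longleftrightarrow>
     (\<forall>x. \<exists>F c. finite F \<and> F \<subseteq> R \<and> (\<forall>i<n. x i = (\<Sum>\<rho>\<in>F. c \<rho> * \<rho> $$ (i, 0))))"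

lemma spans_columns_functional_eq_0:
  assumes "spans_columns n R" and "\<And>\<rho>. \<rho> \<in> R \<Longrightarrow> (\<Sum>j<n. h j * \<rho> $$ (j, 0)) = 0" and "i < n"
  shows "h i = 0"
proof -
  obtain F c where F: "finite F" "F \<subseteq> R"
    and unit: "\<forall>j<n. (if j = i then 1 else 0) = (\<Sum>\<rho>\<in>F. c \<rho> * \<rho> $$ (j, 0))"
    using assms(1)[unfolded spans_columns_def, rule_format, of "\<lambda>j. if j = i then 1 else 0"] by blast
  have "h i = (\<Sum>j<n. h j * (if j = i then 1 else 0))"
    using assms(3) by (simp add: if_distrib[of "(*) _"] cong: if_cong)
  also have "\<dots> = (\<Sum>j<n. h j * (\<Sum>\<rho>\<in>F. c \<rho> * \<rho> $$ (j, 0)))"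
    using unit by simp
  also have "\<dots> = (\<Sum>\<rho>\<in>F. c \<rho> * (\<Sum>j<n. h j * \<rho> $$ (j, 0)))"
    by (simp add: sum_distrib_left sum.swap[of _ F] mult_ac)
  also have "\<dots> = 0"
    using F(2) assms(2) by (simp add: subset_iff)
  finally show ?thesis .
qed

lemma index_mult_kron_column:
  fixes X :: "real mat"
  assumes "X \<in> carrier_mat m (n * q)" "\<rho> \<in> carrier_mat n 1" "\<sigma> \<in> carrier_mat q 1" "r < m"
  shows "(X * kron \<rho> \<sigma>) $$ (r, 0) =
    (\<Sum>a<n. (\<Sum>b<q. X $$ (r, a * q + b) * \<sigma> $$ (b, 0)) * \<rho> $$ (a, 0))"
proof -
  have "(X * kron \<rho> \<sigma>) $$ (r, 0) = (\<Sum>a<n. \<Sum>b<q. X $$ (r, a * q + b) * kron \<rho> \<sigma> $$ (a * q + b, 0))"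
    using assms kron_carrier_mat[OF assms(2,3)] by (intro index_mult_mat_blocked[where l = 1]) simp_all
  also have "\<dots> = (\<Sum>a<n. \<Sum>b<q. X $$ (r, a * q + b) * (\<rho> $$ (a, 0) * \<sigma> $$ (b, 0)))"
    using assms by (intro sum.cong refl) (simp add: mixed_radix_index)
  also have "\<dots> = (\<Sum>a<n. (\<Sum>b<q. X $$ (r, a * q + b) * \<sigma> $$ (b, 0)) * \<rho> $$ (a, 0))"
    unfolding sum_distrib_right by (simp add: mult_ac)
  finally show ?thesis .
qed

lemma mat_eq_if_agree_on_kron_spans:
  fixes X Y :: "real mat"
  assumes "spans_columns n R" "R \<subseteq> carrier_mat n 1"
    and "spans_columns q S" "S \<subseteq> carrier_mat q 1"
    and X: "X \<in> carrier_mat m (n * q)" and Y: "Y \<in> carrier_mat m (n * q)"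
    and agree: "\<And>\<rho> \<sigma>. \<rho> \<in> R \<Longrightarrow> \<sigma> \<in> S \<Longrightarrow> X * kron \<rho> \<sigma> = Y * kron \<rho> \<sigma>"
  shows "X = Y"
proof (rule eq_matI)
  fix r k assume "r < dim_row Y" "k < dim_col Y"
  then have r: "r < m" and k: "k < n * q" using Y by simp_all
  \<comment> \<open>Row r of X - Y, read as a bilinear form in (\<rho>, \<sigma>), vanishes on R \<times> S, hence everywhere.\<close>
  define K where "K a b = X $$ (r, a * q + b) - Y $$ (r, a * q + b)" for a b
  have "(\<Sum>a<n. (\<Sum>b<q. X $$ (r, a * q + b) * \<sigma> $$ (b, 0)) * \<rho> $$ (a, 0)) =
        (\<Sum>a<n. (\<Sum>b<q. Y $$ (r, a * q + b) * \<sigma> $$ (b, 0)) * \<rho> $$ (a, 0))"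
    if "\<rho> \<in> R" "\<sigma> \<in> S" for \<rho> \<sigma>
  proof -
    have \<rho>: "\<rho> \<in> carrier_mat n 1" and \<sigma>: "\<sigma> \<in> carrier_mat q 1"
      using that assms(2,4) by auto
    show ?thesis
      using agree[OF that] index_mult_kron_column[OF X \<rho> \<sigma> r] index_mult_kron_column[OF Y \<rho> \<sigma> r]
      by simp
  qed
  then have col: "(\<Sum>a<n. (\<Sum>b<q. K a b * \<sigma> $$ (b, 0)) * \<rho> $$ (a, 0)) = 0"
    if "\<rho> \<in> R" "\<sigma> \<in> S" for \<rho> \<sigma>
    using that by (simp add: K_def left_diff_distrib sum_subtractf)
  have row: "(\<Sum>b<q. K a b * \<sigma> $$ (b, 0)) = 0" if "a < n" "\<sigma> \<in> S" for a \<sigma>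
    using spans_columns_functional_eq_0[OF assms(1) col[OF _ that(2)] that(1)] .
  have K0: "K a b = 0" if "a < n" "b < q" for a b
    using spans_columns_functional_eq_0[OF assms(3) row[OF that(1)] that(2)] .
  have "0 < q" using k by (auto intro: gr0I)
  then have "K (k div q) (k mod q) = 0"
    using k by (intro K0) (simp_all add: less_mult_imp_div_less)
  then show "X $$ (r, k) = Y $$ (r, k)"
    by (simp add: K_def)
qed (use X Y in simp_all)

lemma tl_gpt_basic:
  assumes "tl_gpt tens I sdim Proc u"
  shows tl_gpt_tens_unit: "tens I I = I"
    and tl_gpt_sdim_tens: "sdim (tens A B) = sdim A * sdim B"
    and tl_gpt_states_carrier: "Proc I A \<subseteq> carrier_mat (sdim A) 1"
    and tl_gpt_states_span: "spans_columns (sdim A) (Proc I A)"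
    and tl_gpt_kron_state: "\<rho> \<in> Proc I A \<Longrightarrow> \<sigma> \<in> Proc I B \<Longrightarrow> kron \<rho> \<sigma> \<in> Proc I (tens A B)"
proof -
  have "tens I I = I" "sdim I = 1" "\<forall>A B. sdim (tens A B) = sdim A * sdim B"
    and "\<forall>A B. Proc A B \<subseteq> carrier_mat (sdim B) (sdim A)"
    and "\<forall>A B A' B' T T'. T \<in> Proc A B \<longrightarrow> T' \<in> Proc A' B' \<longrightarrow>
       kron T T' \<in> Proc (tens A A') (tens B B')"
    and "\<forall>A x. \<exists>F c. finite F \<and> F \<subseteq> Proc I A \<and> (\<forall>i<sdim A. x i = (\<Sum>\<rho>\<in>F. c \<rho> * \<rho> $$ (i, 0)))"
    using assms unfolding tl_gpt_def by simp_all
  then show "tens I I = I" "sdim (tens A B) = sdim A * sdim B"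
    "Proc I A \<subseteq> carrier_mat (sdim A) 1" "spans_columns (sdim A) (Proc I A)"
    "\<rho> \<in> Proc I A \<Longrightarrow> \<sigma> \<in> Proc I B \<Longrightarrow> kron \<rho> \<sigma> \<in> Proc I (tens A B)"
    unfolding spans_columns_def by metis+
qed

lemma diagram_preserving_kron_state:
  assumes "tl_gpt tens I sdim Proc u" "diagram_preserving tens I sdim Proc MS MP"
    and "\<rho> \<in> Proc I A" "\<sigma> \<in> Proc I B"
  shows "MP I (tens A B) (kron \<rho> \<sigma>) = kron (MP I A \<rho>) (MP I B \<sigma>)"
proof -
  have "\<forall>A B A' B' T T'. T \<in> Proc A B \<longrightarrow> T' \<in> Proc A' B' \<longrightarrow>
      MP (tens A A') (tens B B') (kron T T') = kron (MP A B T) (MP A' B' T')"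
    using assms(2) unfolding diagram_preserving_def by simp
  then show ?thesis
    using assms(3,4) tl_gpt_tens_unit[OF assms(1)] by metis
qed

theorem proposition4:
  fixes tens :: "'s \<Rightarrow> 's \<Rightarrow> 's" and I :: 's and sdim :: "'s \<Rightarrow> nat"
    and Proc :: "'s \<Rightarrow> 's \<Rightarrow> real mat set" and u :: "'s \<Rightarrow> real mat"
    and MS :: "'s \<Rightarrow> nat" and MP :: "'s \<Rightarrow> 's \<Rightarrow> real mat \<Rightarrow> real mat"
    and \<chi> :: "'s \<Rightarrow> real mat"
  assumes "tl_gpt tens I sdim Proc u"
    and "diagram_preserving tens I sdim Proc MS MP"
    and "convex_linear I sdim Proc MS MP"
    and "empirically_adequate I Proc MP"
    and "\<And>A. \<chi> A \<in> carrier_mat (MS A) (sdim A)"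
    and "\<And>A \<rho>. \<rho> \<in> Proc I A \<Longrightarrow> \<chi> A * \<rho> = MP I A \<rho>"
  shows "\<chi> (tens A B) = kron (\<chi> A) (\<chi> B)"
proof (rule mat_eq_if_agree_on_kron_spans)
  note gpt = assms(1) and states = tl_gpt_states_carrier[OF assms(1)]
  show "spans_columns (sdim A) (Proc I A)" "spans_columns (sdim B) (Proc I B)"
    by (rule tl_gpt_states_span[OF gpt])+
  show "Proc I A \<subseteq> carrier_mat (sdim A) 1" "Proc I B \<subseteq> carrier_mat (sdim B) 1"
    by (rule states)+
  have "MS (tens A B) = MS A * MS B"
    using assms(2) unfolding diagram_preserving_def by simp
  then show "\<chi> (tens A B) \<in> carrier_mat (MS A * MS B) (sdim A * sdim B)"
    using assms(5)[of "tens A B"] tl_gpt_sdim_tens[OF gpt] by simp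
  show "kron (\<chi> A) (\<chi> B) \<in> carrier_mat (MS A * MS B) (sdim A * sdim B)"
    by (rule kron_carrier_mat[OF assms(5) assms(5)])
  fix \<rho> \<sigma> assume \<rho>: "\<rho> \<in> Proc I A" and \<sigma>: "\<sigma> \<in> Proc I B"
  have "\<chi> (tens A B) * kron \<rho> \<sigma> = MP I (tens A B) (kron \<rho> \<sigma>)"
    using tl_gpt_kron_state[OF gpt \<rho> \<sigma>] by (rule assms(6))
  also have "\<dots> = kron (\<chi> A * \<rho>) (\<chi> B * \<sigma>)"
    using diagram_preserving_kron_state[OF gpt assms(2) \<rho> \<sigma>] assms(6) \<rho> \<sigma> by simp
  also have "\<dots> = kron (\<chi> A) (\<chi> B) * kron \<rho> \<sigma>"
    using states \<rho> \<sigma> by (intro kron_mult_kron[symmetric, OF assms(5) _ assms(5)]) auto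
  finally show "\<chi> (tens A B) * kron \<rho> \<sigma> = kron (\<chi> A) (\<chi> B) * kron \<rho> \<sigma>" .
qed

end
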